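(* Let $(X,Y,Z)$ and $(X',Y',Z')$ be triples of random variables on finite alphabets such that $(X,Y,Z)$ is independent of $(X',Y',Z')$. Then $$\operatorname{Un}((X,X')\to(Z,Z')\mid(Y,Y'))=\operatorname{Un}(X\to Z\mid Y)+\operatorname{Un}(X'\to Z'\mid Y'),$$ where $\operatorname{Un}$ is the unique information defined below.
   Context: For random variables $U,V,W$ on finite alphabets $\mathcal{U},\mathcal{V},\mathcal{W}$ and each $v\in\mathcal{V}$ with $\Pr(V=v)>0$, let $(A_v,B_v,C_v)$ be the random triple on $\mathcal{U}\times\mathcal{V}\times\mathcal{W}$ with $\Pr(A_v=u,B_v=v',C_v=w)=0$ if $\Pr(W=w)=0$ and $\Pr(A_v=u,B_v=v',C_v=w)=\Pr(U=u,V=v',W=w)\Pr(W=w\mid V=v)/\Pr(W=w)$ otherwise. The unique information is $\operatorname{Un}(U\to W\mid V)=\sum_{v:\Pr(V=v)>0}\Pr(V=v)\,I(A_v;C_v)$, where $I$ is mutual information. Pairs such as $(X,X')$ are regarded as single random variables on product alphabets. *)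

theory Defs
  imports "HOL-Probability.Probability"
begin

definition joint3 :: "'o measure \<Rightarrow> ('o \<Rightarrow> 'u) \<Rightarrow> ('o \<Rightarrow> 'v) \<Rightarrow> ('o \<Rightarrow> 'w)
    \<Rightarrow> 'u \<times> 'v \<times> 'w \<Rightarrow> real" where
  "joint3 M U V W = (\<lambda>(u, v, w). measure M {\<omega> \<in> space M. U \<omega> = u \<and> V \<omega> = v \<and> W \<omega> = w})"

definition mutual_info_pmf :: "('a::finite \<times> 'b::finite \<Rightarrow> real) \<Rightarrow> real" where
  "mutual_info_pmf p =
     (let pa = (\<lambda>a. \<Sum>b\<in>UNIV. p (a, b)); pb = (\<lambda>b. \<Sum>a\<in>UNIV. p (a, b)) in
      \<Sum>ab\<in>{ab. p ab > 0}. p ab * log 2 (p ab / (pa (fst ab) * pb (snd ab))))"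

text \<open>The distribution of the triple (A_v, B_v, C_v), given the joint pmf P of (U,V,W).\<close>
definition Un_triple :: "('u::finite \<times> 'v::finite \<times> 'w::finite \<Rightarrow> real) \<Rightarrow> 'v
    \<Rightarrow> 'u \<times> 'v \<times> 'w \<Rightarrow> real" where
  "Un_triple P v = (\<lambda>(u, v', w).
     (let PW = (\<lambda>w. \<Sum>u\<in>UNIV. \<Sum>v\<in>UNIV. P (u, v, w));
          PV = (\<lambda>v. \<Sum>u\<in>UNIV. \<Sum>w\<in>UNIV. P (u, v, w));
          PWgV = (\<lambda>w. (\<Sum>u\<in>UNIV. P (u, v, w)) / PV v) in
      if PW w = 0 then 0 else P (u, v', w) * PWgV w / PW w))"

definition unique_info_pmf :: "('u::finite \<times> 'v::finite \<times> 'w::finite \<Rightarrow> real) \<Rightarrow> real" where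
  "unique_info_pmf P =
     (let PV = (\<lambda>v. \<Sum>u\<in>UNIV. \<Sum>w\<in>UNIV. P (u, v, w)) in
      \<Sum>v\<in>{v. PV v > 0}. PV v *
        mutual_info_pmf (\<lambda>(u, w). \<Sum>v'\<in>UNIV. Un_triple P v (u, v', w)))"

text \<open>Un(U -> W | V) for random variables U, V, W on a probability space M.\<close>
definition unique_info :: "'o measure \<Rightarrow> ('o \<Rightarrow> 'u::finite) \<Rightarrow> ('o \<Rightarrow> 'v::finite)
    \<Rightarrow> ('o \<Rightarrow> 'w::finite) \<Rightarrow> real" where
  "unique_info M U V W = unique_info_pmf (joint3 M U V W)"

end

theory Submission
  imports Defs
begin

text \<open>Independence makes the joint pmf of the paired triple the product \<open>P1 \<otimes> P2\<close> of the
two joint pmfs. All ingredients of the construction of \<open>(A\<^sub>v, B\<^sub>v, C\<^sub>v)\<close> -- the marginals of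
\<open>V\<close>, of \<open>W\<close> and of \<open>(V, W)\<close> -- factorize, hence so does the pmf of \<open>(A\<^sub>v, C\<^sub>v)\<close> at
\<open>v = (v1, v2)\<close>. Mutual information is additive on product distributions because the logarithm
turns the product of likelihood ratios into a sum, and averaging the sum over \<open>(v1, v2)\<close> with
the product weights \<open>P(V = v1) P(V' = v2)\<close> gives the sum of the two averages, as each family
of weights sums to 1.\<close>

lemmas sum_UNIV_prod = sum.cartesian_product'[of _ UNIV UNIV, unfolded UNIV_Times_UNIV]

definition is_pmf :: "('a::finite \<Rightarrow> real) \<Rightarrow> bool" where
  "is_pmf p \<longleftrightarrow> (\<forall>x. 0 \<le> p x) \<and> sum p UNIV = 1"

lemma is_pmfD:
  assumes "is_pmf p"
  shows is_pmf_nonneg: "0 \<le> p x" and is_pmf_sum: "sum p UNIV = 1"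
  using assms unfolding is_pmf_def by auto

definition marg_fst :: "('a \<times> 'b::finite \<Rightarrow> real) \<Rightarrow> 'a \<Rightarrow> real" where
  "marg_fst p a = (\<Sum>b\<in>UNIV. p (a, b))"

definition marg_snd :: "('a::finite \<times> 'b \<Rightarrow> real) \<Rightarrow> 'b \<Rightarrow> real" where
  "marg_snd p b = (\<Sum>a\<in>UNIV. p (a, b))"

definition mutual_info_summand :: "('a::finite \<times> 'b::finite \<Rightarrow> real) \<Rightarrow> 'a \<times> 'b \<Rightarrow> real" where
  "mutual_info_summand p ab =
     (if 0 < p ab then p ab * log 2 (p ab / (marg_fst p (fst ab) * marg_snd p (snd ab))) else 0)"

definition pmf_pair_prod :: "('a \<times> 'b \<Rightarrow> real) \<Rightarrow> ('c \<times> 'd \<Rightarrow> real)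
    \<Rightarrow> ('a \<times> 'c) \<times> ('b \<times> 'd) \<Rightarrow> real" where "pmf_pair_prod q1 q2 = (\<lambda>((a, c), (b, d)). q1 (a, b) * q2 (c, d))"

lemma pmf_pair_prod_apply [simp]: "pmf_pair_prod q1 q2 ((a, c), (b, d)) = q1 (a, b) * q2 (c, d)"
  unfolding pmf_pair_prod_def by simp

lemma sum_UNIV_mult_fst_snd:
  fixes f :: "'a::finite \<Rightarrow> real" and g :: "'b::finite \<Rightarrow> real"
  shows "(\<Sum>x\<in>UNIV. f (fst x) * g (snd x)) = sum f UNIV * sum g UNIV"
  by (simp add: sum_UNIV_prod sum_product)

lemma mutual_info_pmf_eq_sum_summand:
  "mutual_info_pmf p = (\<Sum>ab\<in>UNIV. mutual_info_summand p ab)"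
  unfolding mutual_info_pmf_def mutual_info_summand_def marg_fst_def marg_snd_def Let_def
  by (subst sum.inter_filter[symmetric]) auto

lemma marg_fst_pos: "(\<And>x. 0 \<le> p x) \<Longrightarrow> 0 < p (a, b) \<Longrightarrow> 0 < marg_fst p a"
  unfolding marg_fst_def by (rule sum_pos2[of UNIV b]) auto

lemma marg_snd_pos: "(\<And>x. 0 \<le> p x) \<Longrightarrow> 0 < p (a, b) \<Longrightarrow> 0 < marg_snd p b"
  unfolding marg_snd_def by (rule sum_pos2[of UNIV a]) auto

lemma marg_fst_pmf_pair_prod:
  "marg_fst (pmf_pair_prod q1 q2) (a, c) = marg_fst q1 a * marg_fst q2 c"
  unfolding marg_fst_def pmf_pair_prod_def by (simp add: sum_UNIV_prod sum_product)

lemma marg_snd_pmf_pair_prod: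
  "marg_snd (pmf_pair_prod q1 q2) (b, d) = marg_snd q1 b * marg_snd q2 d"
  unfolding marg_snd_def pmf_pair_prod_def by (simp add: sum_UNIV_prod sum_product)

lemma mutual_info_summand_pmf_pair_prod:
  assumes "\<And>x. 0 \<le> q1 x" and "\<And>x. 0 \<le> q2 x"
  shows "mutual_info_summand (pmf_pair_prod q1 q2) ((a, c), (b, d))
       = mutual_info_summand q1 (a, b) * q2 (c, d) + q1 (a, b) * mutual_info_summand q2 (c, d)"
proof (cases "0 < q1 (a, b) \<and> 0 < q2 (c, d)")
  case True
  then have "0 < marg_fst q1 a" "0 < marg_snd q1 b" "0 < marg_fst q2 c" "0 < marg_snd q2 d"
    using assms by (auto intro: marg_fst_pos marg_snd_pos)
  with True have "log 2 (q1 (a, b) * q2 (c, d)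
        / (marg_fst q1 a * marg_fst q2 c * (marg_snd q1 b * marg_snd q2 d)))
      = log 2 (q1 (a, b) / (marg_fst q1 a * marg_snd q1 b))
        + log 2 (q2 (c, d) / (marg_fst q2 c * marg_snd q2 d))"
    by (subst log_mult_pos[symmetric]) (simp_all add: field_simps)
  with True show ?thesis
    by (simp add: mutual_info_summand_def marg_fst_pmf_pair_prod marg_snd_pmf_pair_prod algebra_simps)
next
  case False
  then have "q1 (a, b) = 0 \<or> q2 (c, d) = 0"
    using assms(1)[of "(a, b)"] assms(2)[of "(c, d)"] by auto
  then show ?thesis by (auto simp: mutual_info_summand_def)
qed

lemma sum_UNIV_transpose:
  fixes g :: "('a::finite \<times> 'c::finite) \<times> ('b::finite \<times> 'd::finite) \<Rightarrow> real"
  shows "(\<Sum>x\<in>UNIV. g x) = (\<Sum>((a, b), (c, d))\<in>UNIV. g ((a, c), (b, d)))"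
  by (rule sum.reindex_bij_witness[of _ "\<lambda>((a, b), (c, d)). ((a, c), (b, d))"
        "\<lambda>((a, c), (b, d)). ((a, b), (c, d))"]) auto

lemma mutual_info_pmf_pair_prod:
  assumes "is_pmf q1" and "is_pmf q2"
  shows "mutual_info_pmf (pmf_pair_prod q1 q2) = mutual_info_pmf q1 + mutual_info_pmf q2"
proof -
  let ?I1 = "mutual_info_summand q1" and ?I2 = "mutual_info_summand q2"
  have "mutual_info_pmf (pmf_pair_prod q1 q2)
      = (\<Sum>(ab, cd)\<in>UNIV. ?I1 ab * q2 cd + q1 ab * ?I2 cd)"
    unfolding mutual_info_pmf_eq_sum_summand
    by (subst sum_UNIV_transpose)
      (simp add: case_prod_beta
        mutual_info_summand_pmf_pair_prod[OF is_pmf_nonneg is_pmf_nonneg, OF assms])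
  also have "\<dots> = sum ?I1 UNIV * sum q2 UNIV + sum q1 UNIV * sum ?I2 UNIV"
    by (simp add: split_beta sum.distrib sum_UNIV_mult_fst_snd)
  also have "\<dots> = mutual_info_pmf q1 + mutual_info_pmf q2"
    by (simp add: is_pmf_sum assms mutual_info_pmf_eq_sum_summand)
  finally show ?thesis .
qed

definition marg_V :: "('u::finite \<times> 'v \<times> 'w::finite \<Rightarrow> real) \<Rightarrow> 'v \<Rightarrow> real" where
  "marg_V P v = (\<Sum>u\<in>UNIV. \<Sum>w\<in>UNIV. P (u, v, w))"

definition marg_W :: "('u::finite \<times> 'v::finite \<times> 'w \<Rightarrow> real) \<Rightarrow> 'w \<Rightarrow> real" where
  "marg_W P w = (\<Sum>u\<in>UNIV. \<Sum>v\<in>UNIV. P (u, v, w))"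

definition marg_VW :: "('u::finite \<times> 'v \<times> 'w \<Rightarrow> real) \<Rightarrow> 'v \<Rightarrow> 'w \<Rightarrow> real" where
  "marg_VW P v w = (\<Sum>u\<in>UNIV. P (u, v, w))"

definition Un_pair :: "('u::finite \<times> 'v::finite \<times> 'w::finite \<Rightarrow> real) \<Rightarrow> 'v \<Rightarrow> 'u \<times> 'w \<Rightarrow> real"
  where "Un_pair P v = (\<lambda>(u, w). \<Sum>v'\<in>UNIV. Un_triple P v (u, v', w))"

definition pmf_triple_prod :: "('a \<times> 'b \<times> 'c \<Rightarrow> real) \<Rightarrow> ('d \<times> 'e \<times> 'f \<Rightarrow> real)
    \<Rightarrow> ('a \<times> 'd) \<times> ('b \<times> 'e) \<times> ('c \<times> 'f) \<Rightarrow> real" where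
  "pmf_triple_prod P1 P2 = (\<lambda>((u, u'), (v, v'), (w, w')). P1 (u, v, w) * P2 (u', v', w'))"

lemma pmf_triple_prod_apply [simp]:
  "pmf_triple_prod P1 P2 ((u, u'), (v, v'), (w, w')) = P1 (u, v, w) * P2 (u', v', w')"
  unfolding pmf_triple_prod_def by simp

lemma Un_triple_altdef:
  "Un_triple P v (u, v', w) =
     (if marg_W P w = 0 then 0 else P (u, v', w) * (marg_VW P v w / marg_V P v) / marg_W P w)"
  unfolding Un_triple_def marg_W_def marg_V_def marg_VW_def Let_def by simp

lemma unique_info_pmf_altdef:
  "unique_info_pmf P = (\<Sum>v\<in>{v. 0 < marg_V P v}. marg_V P v * mutual_info_pmf (Un_pair P v))"
  unfolding unique_info_pmf_def marg_V_def Un_pair_def Let_def ..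

lemma marg_V_pmf_triple_prod: "marg_V (pmf_triple_prod P1 P2) (v, v') = marg_V P1 v * marg_V P2 v'"
  unfolding marg_V_def by (simp add: sum_UNIV_prod sum_product)

lemma marg_W_pmf_triple_prod: "marg_W (pmf_triple_prod P1 P2) (w, w') = marg_W P1 w * marg_W P2 w'"
  unfolding marg_W_def by (simp add: sum_UNIV_prod sum_product)

lemma marg_VW_pmf_triple_prod:
  "marg_VW (pmf_triple_prod P1 P2) (v, v') (w, w') = marg_VW P1 v w * marg_VW P2 v' w'"
  unfolding marg_VW_def by (simp add: sum_UNIV_prod sum_product)

lemma Un_triple_pmf_triple_prod:
  "Un_triple (pmf_triple_prod P1 P2) (v, v') ((u, u'), (v1, v1'), (w, w'))
     = Un_triple P1 v (u, v1, w) * Un_triple P2 v' (u', v1', w')"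
  unfolding Un_triple_altdef marg_V_pmf_triple_prod marg_W_pmf_triple_prod marg_VW_pmf_triple_prod
  by (simp add: mult_ac)

lemma Un_pair_pmf_triple_prod:
  "Un_pair (pmf_triple_prod P1 P2) (v, v') = pmf_pair_prod (Un_pair P1 v) (Un_pair P2 v')"
  unfolding Un_pair_def pmf_pair_prod_def
  by (auto simp: Un_triple_pmf_triple_prod sum_UNIV_prod sum_product)

lemma marg_V_nonneg: "(\<And>x. 0 \<le> P x) \<Longrightarrow> 0 \<le> marg_V P v"
  unfolding marg_V_def by (auto intro!: sum_nonneg)

lemma marg_VW_le_marg_W: "(\<And>x. 0 \<le> P x) \<Longrightarrow> marg_VW P v w \<le> marg_W P w"
  unfolding marg_VW_def marg_W_def by (auto intro!: sum_mono member_le_sum)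

lemma sum_marg_V_support:
  assumes "is_pmf P"
  shows "(\<Sum>v\<in>{v. 0 < marg_V P v}. marg_V P v) = 1"
proof -
  have "(\<Sum>v\<in>{v. 0 < marg_V P v}. marg_V P v) = (\<Sum>v\<in>UNIV. marg_V P v)"
    using marg_V_nonneg[OF is_pmf_nonneg[OF assms]]
    by (intro sum.mono_neutral_left) (auto simp: order_less_le)
  also have "\<dots> = sum P UNIV"
    unfolding marg_V_def sum_UNIV_prod[of P] sum_UNIV_prod[of "\<lambda>x. P (_, x)"] by (rule sum.swap)
  finally show ?thesis using is_pmf_sum[OF assms] by simp
qed

lemma Un_pair_nonneg: "(\<And>x. 0 \<le> P x) \<Longrightarrow> 0 \<le> Un_pair P v x"
  unfolding Un_pair_def Un_triple_def Let_def
  by (auto simp: case_prod_beta intro!: sum_nonneg divide_nonneg_nonneg mult_nonneg_nonneg)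

lemma marg_VW_eq_0: "(\<And>x. 0 \<le> P x) \<Longrightarrow> marg_W P w = 0 \<Longrightarrow> marg_VW P v w = 0"
  using marg_VW_le_marg_W[of P v w] unfolding marg_VW_def
  by (simp add: order_antisym sum_nonneg)

lemma sum_Un_triple_fixed_W:
  assumes "\<And>x. 0 \<le> P x"
  shows "(\<Sum>u\<in>UNIV. \<Sum>v'\<in>UNIV. Un_triple P v (u, v', w)) = marg_VW P v w / marg_V P v"
proof (cases "marg_W P w = 0")
  case True
  then show ?thesis by (simp add: Un_triple_altdef marg_VW_eq_0 assms)
next
  case False
  have "(\<Sum>u\<in>UNIV. \<Sum>v'\<in>UNIV. Un_triple P v (u, v', w))
      = marg_W P w * (marg_VW P v w / marg_V P v) / marg_W P w"
    unfolding Un_triple_altdef using False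
    by (simp add: marg_W_def sum_divide_distrib[symmetric] sum_distrib_right[symmetric])
  with False show ?thesis by simp
qed

lemma is_pmf_Un_pair:
  assumes "is_pmf P" and "0 < marg_V P v"
  shows "is_pmf (Un_pair P v)"
proof -
  have "sum (Un_pair P v) UNIV = (\<Sum>w\<in>UNIV. marg_VW P v w) / marg_V P v"
    unfolding Un_pair_def sum_UNIV_prod sum_divide_distrib
    by (subst sum.swap) (simp add: sum_Un_triple_fixed_W is_pmf_nonneg[OF assms(1)])
  also have "\<dots> = 1"
    using assms(2) unfolding marg_VW_def marg_V_def by (subst sum.swap) simp
  finally show ?thesis
    unfolding is_pmf_def using Un_pair_nonneg is_pmf_nonneg[OF assms(1)] by blast
qed

lemma marg_V_pmf_triple_prod_pos_iff:
  assumes "is_pmf P1" and "is_pmf P2"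
  shows "0 < marg_V (pmf_triple_prod P1 P2) (v, v') \<longleftrightarrow> 0 < marg_V P1 v \<and> 0 < marg_V P2 v'"
proof -
  have "0 \<le> marg_V P1 v" and "0 \<le> marg_V P2 v'"
    using assms by (simp_all add: marg_V_nonneg is_pmf_nonneg)
  then show ?thesis by (auto simp: marg_V_pmf_triple_prod zero_less_mult_iff)
qed

lemma unique_info_pmf_pmf_triple_prod:
  assumes "is_pmf P1" and "is_pmf P2"
  shows "unique_info_pmf (pmf_triple_prod P1 P2) = unique_info_pmf P1 + unique_info_pmf P2"
proof -
  define V1 where "V1 = {v. 0 < marg_V P1 v}"
  define V2 where "V2 = {v. 0 < marg_V P2 v}"
  define I1 where "I1 v = mutual_info_pmf (Un_pair P1 v)" for v
  define I2 where "I2 v = mutual_info_pmf (Un_pair P2 v)" for v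
  have support: "{vv. 0 < marg_V (pmf_triple_prod P1 P2) vv} = V1 \<times> V2"
    using marg_V_pmf_triple_prod_pos_iff[OF assms] by (auto simp: V1_def V2_def)
  have "unique_info_pmf (pmf_triple_prod P1 P2)
      = (\<Sum>(v, v')\<in>V1 \<times> V2. marg_V P1 v * marg_V P2 v' * (I1 v + I2 v'))"
    unfolding unique_info_pmf_altdef support
    by (intro sum.cong) (auto simp: V1_def V2_def I1_def I2_def marg_V_pmf_triple_prod
        Un_pair_pmf_triple_prod mutual_info_pmf_pair_prod is_pmf_Un_pair assms)
  also have "\<dots> = (\<Sum>v\<in>V1. \<Sum>v'\<in>V2.
      marg_V P1 v * I1 v * marg_V P2 v' + marg_V P1 v * (marg_V P2 v' * I2 v'))"
    unfolding sum.cartesian_product' by (intro sum.cong refl) (simp add: algebra_simps)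
  also have "\<dots> = (\<Sum>v\<in>V1. marg_V P1 v * I1 v) * (\<Sum>v'\<in>V2. marg_V P2 v')
      + (\<Sum>v\<in>V1. marg_V P1 v) * (\<Sum>v'\<in>V2. marg_V P2 v' * I2 v')"
    by (simp only: sum_product sum.distrib)
  also have "\<dots> = unique_info_pmf P1 + unique_info_pmf P2"
    using sum_marg_V_support[OF assms(1)] sum_marg_V_support[OF assms(2)]
    by (simp add: unique_info_pmf_altdef V1_def V2_def I1_def I2_def)
  finally show ?thesis .
qed

lemma is_pmf_joint3:
  assumes "prob_space M" and [measurable]: "X \<in> measurable M (count_space UNIV)"
    "Y \<in> measurable M (count_space UNIV)" "Z \<in> measurable M (count_space UNIV)"
  shows "is_pmf (joint3 M X Y Z)"
proof -
  interpret prob_space M by fact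
  define A where "A t = {\<omega> \<in> space M. (X \<omega>, Y \<omega>, Z \<omega>) = t}" for t
  have A_sets: "A t \<in> sets M" for t
    unfolding A_def by (cases t) (simp, measurable)
  have "sum (joint3 M X Y Z) UNIV = (\<Sum>t\<in>UNIV. measure M (A t))"
    by (intro sum.cong) (auto simp: joint3_def A_def)
  also have "\<dots> = measure M (\<Union>t. A t)"
    using A_sets by (intro finite_measure_finite_Union[symmetric])
      (auto simp: disjoint_family_on_def A_def)
  also have "(\<Union>t. A t) = space M" by (auto simp: A_def)
  finally show ?thesis by (simp add: is_pmf_def joint3_def prob_space)
qed

lemma joint3_pair_indep:
  assumes "prob_space M"
    and indep: "prob_space.indep_set M
           (sets (vimage_algebra (space M) (\<lambda>\<omega>. (X \<omega>, Y \<omega>, Z \<omega>)) (count_space UNIV)))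
           (sets (vimage_algebra (space M) (\<lambda>\<omega>. (X' \<omega>, Y' \<omega>, Z' \<omega>)) (count_space UNIV)))"
  shows "joint3 M (\<lambda>\<omega>. (X \<omega>, X' \<omega>)) (\<lambda>\<omega>. (Y \<omega>, Y' \<omega>)) (\<lambda>\<omega>. (Z \<omega>, Z' \<omega>))
       = pmf_triple_prod (joint3 M X Y Z) (joint3 M X' Y' Z')"
proof -
  interpret prob_space M by fact
  have "joint3 M (\<lambda>\<omega>. (X \<omega>, X' \<omega>)) (\<lambda>\<omega>. (Y \<omega>, Y' \<omega>)) (\<lambda>\<omega>. (Z \<omega>, Z' \<omega>))
        ((u, u'), (v, v'), (w, w'))
      = joint3 M X Y Z (u, v, w) * joint3 M X' Y' Z' (u', v', w')" for u u' v v' w w'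
  proof -
    let ?A = "(\<lambda>\<omega>. (X \<omega>, Y \<omega>, Z \<omega>)) -` {(u, v, w)} \<inter> space M"
    let ?B = "(\<lambda>\<omega>. (X' \<omega>, Y' \<omega>, Z' \<omega>)) -` {(u', v', w')} \<inter> space M"
    have "measure M (?A \<inter> ?B) = measure M ?A * measure M ?B"
      by (rule indep_setD[OF indep]) (auto simp: sets_vimage_algebra2)
    moreover have "?A \<inter> ?B = {\<omega> \<in> space M.
        (X \<omega>, X' \<omega>) = (u, u') \<and> (Y \<omega>, Y' \<omega>) = (v, v') \<and> (Z \<omega>, Z' \<omega>) = (w, w')}"
      by auto
    moreover have "?A = {\<omega> \<in> space M. X \<omega> = u \<and> Y \<omega> = v \<and> Z \<omega> = w}" by auto
    moreover have "?B = {\<omega> \<in> space M. X' \<omega> = u' \<and> Y' \<omega> = v' \<and> Z' \<omega> = w'}" by auto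
    ultimately show ?thesis by (simp add: joint3_def)
  qed
  then show ?thesis by (simp add: fun_eq_iff)
qed

theorem lemma8:
  fixes M :: "'o measure"
    and X :: "'o \<Rightarrow> 'x::finite" and Y :: "'o \<Rightarrow> 'y::finite" and Z :: "'o \<Rightarrow> 'z::finite"
    and X' :: "'o \<Rightarrow> 'x2::finite" and Y' :: "'o \<Rightarrow> 'y2::finite" and Z' :: "'o \<Rightarrow> 'z2::finite"
  assumes "prob_space M"
    and "X \<in> measurable M (count_space UNIV)" and "Y \<in> measurable M (count_space UNIV)"
    and "Z \<in> measurable M (count_space UNIV)" and "X' \<in> measurable M (count_space UNIV)"
    and "Y' \<in> measurable M (count_space UNIV)" and "Z' \<in> measurable M (count_space UNIV)"
    and "prob_space.indep_set M
           (sets (vimage_algebra (space M) (\<lambda>\<omega>. (X \<omega>, Y \<omega>, Z \<omega>)) (count_space UNIV)))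
           (sets (vimage_algebra (space M) (\<lambda>\<omega>. (X' \<omega>, Y' \<omega>, Z' \<omega>)) (count_space UNIV)))"
  shows "unique_info M (\<lambda>\<omega>. (X \<omega>, X' \<omega>)) (\<lambda>\<omega>. (Y \<omega>, Y' \<omega>)) (\<lambda>\<omega>. (Z \<omega>, Z' \<omega>))
       = unique_info M X Y Z + unique_info M X' Y' Z'"
proof -
  have "is_pmf (joint3 M X Y Z)" and "is_pmf (joint3 M X' Y' Z')"
    using assms(1-7) by (auto intro: is_pmf_joint3)
  then show ?thesis
    unfolding unique_info_def joint3_pair_indep[OF assms(1,8)]
    by (rule unique_info_pmf_pmf_triple_prod)
qed

end
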